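(* For all positive integers $r,n$, the length function $\ell$ and the sorting index $\mathsf{sor}$ have the same distribution over $\mathsf{G}_{r,n}$; namely $$\sum_{\pi\in\mathsf{G}_{r,n}}q^{\ell(\pi)}=\sum_{\pi\in\mathsf{G}_{r,n}}q^{\mathsf{sor}(\pi)}=[n]_q!\cdot\prod_{i=1}^n\bigl(1+q^i[r-1]_q\bigr),$$ where $[i]_q=1+q+\cdots+q^{i-1}$ and $[n]_q!=[1]_q[2]_q\cdots[n]_q$.
   Context: $\mathsf{G}_{r,n}=C_r\wr\mathfrak{S}_n$ is the set of pairs $\pi=(\sigma,\mathbf z)$ with $\sigma\in\mathfrak S_n$, $\mathbf z\in(\mathbb Z/r\mathbb Z)^n$, written as the word $\pi=\sigma_1^{[z_1]}\cdots\sigma_n^{[z_n]}$ ($\sigma_i$ = base value, $z_i\in\{0,\dots,r-1\}$ = color of the $i$-th letter; colors are read mod $r$). Product: $(\sigma,\mathbf z)(\rho,\mathbf w)=(\sigma\rho,\mathbf w+\rho(\mathbf z))$ with $\rho(\mathbf z)=(z_{\rho(1)},\dots,z_{\rho(n)})$. Length: let $s_0=1^{[1]}2\cdots n$ and, for $1\le i\le n-1$, let $s_i$ be the element with base permutation the adjacent transposition $(i\ i+1)$ and all colors $0$ (so right multiplication by $s_0$ adds $1$ to the color of the first letter and right multiplication by $s_i$ swaps the letters in positions $i,i+1$). $\ell(\pi)$ is the minimal number of factors needed to write $\pi$ as a product of elements of $\{s_0,\dots,s_{n-1}\}$. Sorting index: for $1\le i<j$ and $t\in\mathbb Z/r$,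 right multiplication of a word $\tau_1^{[y_1]}\cdots\tau_j^{[y_j]}$ by $(i^{[t]}\,j)$ replaces the letter in position $j$ by $\tau_i^{[y_i+t]}$ and the letter in position $i$ by $\tau_j^{[y_j-t]}$. Given $\pi$, set $\pi^{(n)}=\pi$; for $j=n,n-1,\dots,1$ the word $\pi^{(j)}$ has length $j$ and base values $\{1,\dots,j\}$; let $c_j$ be the position in $\pi^{(j)}$ of the letter with base value $j$, $z$ its color, and $e_j\in\{0,\dots,r-1\}$ with $e_j\equiv -z \pmod r$; if $c_j<j$ let $\pi^{(j-1)}$ be the first $j-1$ letters of $\pi^{(j)}\cdot(c_j^{[e_j]}\,j)$ (whose last letter is $j^{[0]}$), and if $c_j=j$ let $\pi^{(j-1)}$ be the first $j-1$ letters of $\pi^{(j)}$. Then $$\mathsf{sor}(\pi)=\sum_{j=1}^n\Bigl(j-c_j+\chi(e_j>0)\bigl(2(c_j-1)+e_j\bigr)\Bigr),$$ where $\chi(A)=1$ if $A$ holds and $0$ otherwise. (This is the total distance travelled in the paper's sorting process.) *)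

theory Defs
  imports Main
begin

text \<open>Elements of the wreath product C_r wr S_n are colored words:
  a list of pairs (value, color), values in {1..n} each exactly once,
  colors in {0..r-1}.\<close>

definition colored_perms :: "nat \<Rightarrow> nat \<Rightarrow> (nat \<times> nat) list set" where
  "colored_perms r n = {w. length w = n \<and> distinct (map fst w) \<and> set (map fst w) = {1..n}
      \<and> (\<forall>x\<in>set w. snd x < r)}"

text \<open>Product (sigma,z)(rho,w) = (sigma rho, w + rho(z)); in word form the i-th letter of
  p*q is the letter of p in position rho(i) with color increased by the color w_i.\<close>

definition cmult :: "nat \<Rightarrow> (nat \<times> nat) list \<Rightarrow> (nat \<times> nat) list \<Rightarrow> (nat \<times> nat) list" where
  "cmult r p q = map (\<lambda>i. (fst (p ! (fst (q ! i) - 1)),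
                           (snd (p ! (fst (q ! i) - 1)) + snd (q ! i)) mod r)) [0..<length q]"

definition cid :: "nat \<Rightarrow> (nat \<times> nat) list" where
  "cid n = map (\<lambda>i. (i, 0)) [1..<Suc n]"

definition gen0 :: "nat \<Rightarrow> nat \<Rightarrow> (nat \<times> nat) list" where
  "gen0 r n = (cid n)[0 := (1, 1 mod r)]"

definition geni :: "nat \<Rightarrow> nat \<Rightarrow> (nat \<times> nat) list" where
  "geni n i = (cid n)[i - 1 := (i + 1, 0), i := (i, 0)]"

definition generators :: "nat \<Rightarrow> nat \<Rightarrow> (nat \<times> nat) list set" where
  "generators r n = insert (gen0 r n) {geni n i | i. 1 \<le> i \<and> i \<le> n - 1}"

definition clength :: "nat \<Rightarrow> nat \<Rightarrow> (nat \<times> nat) list \<Rightarrow> nat" where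
  "clength r n w = (LEAST k. \<exists>gs. length gs = k \<and> set gs \<subseteq> generators r n
                                \<and> foldl (cmult r) (cid n) gs = w)"

definition sor_pos :: "(nat \<times> nat) list \<Rightarrow> nat" where
  "sor_pos w = Suc (LEAST i. i < length w \<and> fst (w ! i) = length w)"

definition sor_e :: "nat \<Rightarrow> (nat \<times> nat) list \<Rightarrow> nat" where
  "sor_e r w = (r - snd (w ! (sor_pos w - 1)) mod r) mod r"

definition sor_cost :: "nat \<Rightarrow> (nat \<times> nat) list \<Rightarrow> nat" where
  "sor_cost r w = (let j = length w; c = sor_pos w; e = sor_e r w in
      j - c + (if e > 0 then 2 * (c - 1) + e else 0))"

text \<open>One step: if c < j, multiply on the right by (c^[e] j) (position j receives
  letter tau_c with color y_c + e, position c receives tau_j with color y_j - e), then drop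
  the last letter; if c = j just drop the last letter.\<close>

definition sor_step :: "nat \<Rightarrow> (nat \<times> nat) list \<Rightarrow> (nat \<times> nat) list" where
  "sor_step r w = (let j = length w; c = sor_pos w; e = sor_e r w in
      if c < j then
        take (j - 1) (w[c - 1 := (fst (w ! (j - 1)), (snd (w ! (j - 1)) + r - e) mod r),
                        j - 1 := (fst (w ! (c - 1)), (snd (w ! (c - 1)) + e) mod r)])
      else take (j - 1) w)"

definition sor :: "nat \<Rightarrow> (nat \<times> nat) list \<Rightarrow> nat" where
  "sor r w = (\<Sum>k<length w. sor_cost r ((sor_step r ^^ k) w))"

definition qint :: "'a::comm_semiring_1 \<Rightarrow> nat \<Rightarrow> 'a" where
  "qint q i = (\<Sum>k<i. q ^ k)"

definition qfact :: "'a::comm_semiring_1 \<Rightarrow> nat \<Rightarrow> 'a" where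
  "qfact q n = (\<Prod>i=1..n. qint q i)"

end

theory Submission
  imports Defs "HOL-Library.Multiset"
begin

text \<open>The length is given by an explicit statistic \<open>inv_length\<close>, a count of weighted inversions:
  each generator changes it by at most one, and every element other than the identity has a
  generator lowering it by exactly one. Both \<open>inv_length\<close> and \<open>sor\<close> are then analysed by
  inserting the largest letter \<open>n + 1\<close> with some colour \<open>e\<close> at some position \<open>c\<close>: deleting that
  letter (for \<open>inv_length\<close>), respectively one step of the sorting process (for \<open>sor\<close>), is a
  bijection \<open>G(r,n+1) \<rightarrow> G(r,n) \<times> {0..n} \<times> {0..r-1}\<close> along which the statistic increases by
  \<open>n - c\<close> if \<open>e = 0\<close> and by \<open>n + c + e\<close> otherwise. Hence both generating functions acquire
  the factor \<open>[n+1]\<^sub>q (1 + q\<^sup>n\<^sup>+\<^sup>1 [r-1]\<^sub>q)\<close> in passing from \<open>n\<close> to \<open>n + 1\<close>.\<close>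

lemma colored_permsD:
  "w \<in> colored_perms r n \<Longrightarrow>
     length w = n \<and> distinct (map fst w) \<and> set (map fst w) = {1..n} \<and> (\<forall>x\<in>set w. snd x < r)"
  by (simp add: colored_perms_def)

lemma colored_perms_0: "colored_perms r 0 = {[]}"
  by (auto simp: colored_perms_def)

lemma finite_colored_perms: "finite (colored_perms r n)"
proof (rule finite_subset)
  show "colored_perms r n \<subseteq> {xs. set xs \<subseteq> {1..n} \<times> {..<r} \<and> length xs = n}"
    unfolding colored_perms_def by (force simp: mem_Times_iff)
  show "finite {xs. set xs \<subseteq> {1..n} \<times> {..<r} \<and> length xs = n}"
    by (rule finite_lists_length_eq) simp
qed

lemma length_cid [simp]: "length (cid n) = n"
  by (simp add: cid_def)

lemma nth_cid [simp]: "i < n \<Longrightarrow> cid n ! i = (Suc i, 0)"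
  by (simp add: cid_def del: upt_Suc)

lemma cid_in_colored_perms: "0 < r \<Longrightarrow> cid n \<in> colored_perms r n"
  unfolding cid_def colored_perms_def
  by (auto simp: image_image comp_def distinct_map inj_on_def atLeastLessThanSuc_atLeastAtMost
      simp del: upt_Suc)

lemma colored_perms_mset_iff:
  "w \<in> colored_perms r n \<longleftrightarrow>
     length w = n \<and> mset (map fst w) = mset [1..<Suc n] \<and> (\<forall>x\<in>set w. snd x < r)"
proof -
  have "distinct (map fst w) \<and> set (map fst w) = {1..n} \<longleftrightarrow> mset (map fst w) = mset [1..<Suc n]"
  proof
    assume "distinct (map fst w) \<and> set (map fst w) = {1..n}"
    then show "mset (map fst w) = mset [1..<Suc n]"
      by (subst set_eq_iff_mset_eq_distinct[symmetric]) (auto simp del: upt_Suc)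
  next
    assume m: "mset (map fst w) = mset [1..<Suc n]"
    then have "distinct (map fst w)" using mset_eq_imp_distinct_iff[OF m] by (simp del: upt_Suc)
    moreover have "set (map fst w) = set [1..<Suc n]" using m by (metis set_mset_mset)
    ultimately show "distinct (map fst w) \<and> set (map fst w) = {1..n}" by (auto simp del: upt_Suc)
  qed
  then show ?thesis unfolding colored_perms_def by blast
qed

lemma colored_perms_insert_max_iff:
  "as @ (Suc n, z) # bs \<in> colored_perms r (Suc n) \<longleftrightarrow> as @ bs \<in> colored_perms r n \<and> z < r"
proof -
  have "mset [1..<Suc (Suc n)] = add_mset (Suc n) (mset [1..<Suc n])" by simp
  then show ?thesis unfolding colored_perms_mset_iff by (auto simp del: upt_Suc mset_upt)
qed

lemma colored_perms_swap:
  assumes "w \<in> colored_perms r n" "Suc i < n"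
  shows "w[i := w ! Suc i, Suc i := w ! i] \<in> colored_perms r n"
proof -
  have l: "length w = n" using colored_permsD[OF assms(1)] by simp
  have "map fst (w[i := w ! Suc i, Suc i := w ! i])
      = (map fst w)[i := map fst w ! Suc i, Suc i := map fst w ! i]"
    using assms l by (simp add: map_update)
  moreover have "set (w[i := w ! Suc i, Suc i := w ! i]) = set w"
    using assms l by (simp add: set_swap)
  moreover have "distinct ((map fst w)[i := map fst w ! Suc i, Suc i := map fst w ! i])"
    using assms l colored_permsD[OF assms(1)] by (subst distinct_swap) simp_all
  moreover have "set ((map fst w)[i := map fst w ! Suc i, Suc i := map fst w ! i]) = set (map fst w)"
    using assms l by (subst set_swap) simp_all
  ultimately show ?thesis
    using colored_permsD[OF assms(1)] unfolding colored_perms_def by simp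
qed

lemma colored_perms_recolor_head:
  assumes "w \<in> colored_perms r n" "0 < n" "z < r"
  shows "w[0 := (fst (w ! 0), z)] \<in> colored_perms r n"
proof -
  have "map fst (w[0 := (fst (w ! 0), z)]) = map fst w"
    using colored_permsD[OF assms(1)] assms(2) by (simp add: map_update list_update_same_conv)
  moreover have "\<forall>x\<in>set (w[0 := (fst (w ! 0), z)]). snd x < r"
    using colored_permsD[OF assms(1)] assms(3) by (auto dest: set_update_subset_insert[THEN subsetD])
  ultimately show ?thesis using colored_permsD[OF assms(1)] unfolding colored_perms_def
    by (simp del: set_map)
qed

lemma fst_nth_neq:
  assumes "distinct (map fst w)" "i < length w" "j < length w" "i \<noteq> j"
  shows "fst (w ! i) \<noteq> fst (w ! j)"
  using assms nth_eq_iff_index_eq[of "map fst w" i j] by simp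

section \<open>The length as a count of weighted inversions\<close>

definition inv_pair :: "nat \<times> nat \<Rightarrow> nat \<times> nat \<Rightarrow> nat" where
  "inv_pair a b = (if fst b < fst a \<and> snd a = 0 then 1 else 0)
                + (if fst a < fst b \<and> snd b \<noteq> 0 then 1 else 0)"

definition color_weight :: "nat \<times> nat \<Rightarrow> nat" where
  "color_weight a = (if snd a = 0 then 0 else fst a - 1 + snd a)"

fun inv_length :: "(nat \<times> nat) list \<Rightarrow> nat" where
  "inv_length [] = 0"
| "inv_length (x # xs) = (\<Sum>y\<leftarrow>xs. inv_pair x y) + color_weight x + inv_length xs"

lemma inv_pair_add_swap: "fst a \<noteq> fst b \<Longrightarrow> inv_pair a b + inv_pair b a = 1"
  unfolding inv_pair_def by auto

lemma inv_length_swap: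
  "inv_length (as @ a # b # bs) + inv_pair b a = inv_length (as @ b # a # bs) + inv_pair a b"
  by (induction as) (simp_all add: inv_pair_def)

lemma inv_length_remove:
  "inv_length (as @ m # bs)
     = inv_length (as @ bs) + (\<Sum>a\<leftarrow>as. inv_pair a m) + (\<Sum>b\<leftarrow>bs. inv_pair m b) + color_weight m"
  by (induction as) simp_all

lemma inv_length_cid: "inv_length (cid n) = 0"
proof -
  have "inv_length xs = 0"
    if "\<forall>x\<in>set xs. snd x = 0" "sorted_wrt (\<lambda>x y. fst x < fst y) xs" for xs
    using that
  proof (induction xs)
    case (Cons x xs)
    have "(\<Sum>y\<leftarrow>xs. inv_pair x y) = 0"
      using Cons.prems by (auto simp: inv_pair_def sum_list_eq_0_iff)
    then show ?case using Cons by (simp add: color_weight_def)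
  qed simp
  then show ?thesis
    unfolding cid_def by (auto simp: sorted_wrt_map sorted_wrt_upt simp del: upt_Suc)
qed

lemma inv_length_Cons:
  assumes "distinct (map fst ((v, z) # xs))" "set (map fst ((v, z) # xs)) = {1..n}"
  shows "inv_length ((v, z) # xs)
    = v - 1 + z + (\<Sum>y\<leftarrow>xs. if v < fst y \<and> snd y \<noteq> 0 then 1 else 0) + inv_length xs"
proof -
  have "v \<le> n" "v \<notin> fst ` set xs" "insert v (fst ` set xs) = {1..n}" using assms by auto
  then have "set (filter (\<lambda>x. x < v) (map fst xs)) = {1..<v}" by (auto simp: set_eq_iff)
  then have "length (filter (\<lambda>x. x < v) (map fst xs)) = v - 1"
    using assms(1) distinct_card[of "filter (\<lambda>x. x < v) (map fst xs)"] by simp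
  then have smaller: "(\<Sum>y\<leftarrow>xs. if fst y < v then 1 else 0) = v - 1"
    by (simp add: sum_list_map_filter'[symmetric] sum_list_triv filter_map comp_def)
  have "(\<Sum>y\<leftarrow>xs. inv_pair (v, z) y)
      = (\<Sum>y\<leftarrow>xs. if fst y < v \<and> z = 0 then 1 else 0)
        + (\<Sum>y\<leftarrow>xs. if v < fst y \<and> snd y \<noteq> 0 then 1 else 0)"
    by (induction xs) (auto simp: inv_pair_def)
  then show ?thesis
    using smaller assms(2) by (cases "z = 0") (auto simp: color_weight_def)
qed

lemma inv_length_recolor_head:
  assumes "w \<in> colored_perms r n" "0 < n"
  shows "inv_length (w[0 := (fst (w ! 0), z)]) + snd (w ! 0) = inv_length w + z"
proof -
  obtain v z0 xs where w: "w = (v, z0) # xs"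
    using colored_permsD[OF assms(1)] assms(2) by (cases w) auto
  have "inv_length ((v, y) # xs)
      = v - 1 + y + (\<Sum>y\<leftarrow>xs. if v < fst y \<and> snd y \<noteq> 0 then 1 else 0) + inv_length xs" for y
    by (rule inv_length_Cons) (use colored_permsD[OF assms(1)] w in auto)
  then show ?thesis using w by simp
qed

section \<open>Length in the generators\<close>

lemma length_cmult [simp]: "length (cmult r p q) = length q"
  by (simp add: cmult_def)

lemma cmult_gen0:
  assumes "w \<in> colored_perms r n" "0 < n"
  shows "cmult r w (gen0 r n) = w[0 := (fst (w ! 0), Suc (snd (w ! 0)) mod r)]"
proof (rule nth_equalityI)
  fix t assume "t < length (cmult r w (gen0 r n))"
  then have "t < n" by (simp add: gen0_def)
  then show "cmult r w (gen0 r n) ! t = w[0 := (fst (w ! 0), Suc (snd (w ! 0)) mod r)] ! t"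
    using assms colored_permsD[OF assms(1)]
    by (cases t) (auto simp: gen0_def cmult_def nth_list_update mod_add_right_eq simp del: upt_Suc)
qed (use colored_permsD[OF assms(1)] in \<open>simp add: gen0_def\<close>)

lemma cmult_geni:
  assumes "w \<in> colored_perms r n" "Suc i < n"
  shows "cmult r w (geni n (Suc i)) = w[i := w ! Suc i, Suc i := w ! i]"
proof (rule nth_equalityI)
  fix t assume "t < length (cmult r w (geni n (Suc i)))"
  then have "t < n" by (simp add: geni_def)
  then show "cmult r w (geni n (Suc i)) ! t = w[i := w ! Suc i, Suc i := w ! i] ! t"
    using assms colored_permsD[OF assms(1)]
    by (auto simp: geni_def cmult_def nth_list_update simp del: upt_Suc)
qed (use colored_permsD[OF assms(1)] in \<open>simp add: geni_def\<close>)

lemma inv_length_swap_adjacent: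
  assumes "Suc i < length w"
  shows "inv_length w + inv_pair (w ! Suc i) (w ! i)
       = inv_length (w[i := w ! Suc i, Suc i := w ! i]) + inv_pair (w ! i) (w ! Suc i)"
proof -
  define as bs where "as = take i w" and "bs = drop (Suc (Suc i)) w"
  have "w = as @ w ! i # drop (Suc i) w"
    unfolding as_def bs_def using assms by (intro id_take_nth_drop) simp
  also have "drop (Suc i) w = w ! Suc i # bs"
    unfolding as_def bs_def using assms by (simp add: Cons_nth_drop_Suc)
  finally have w: "w = as @ w ! i # w ! Suc i # bs" .
  have "w[i := w ! Suc i, Suc i := w ! i] = as @ w ! Suc i # w ! i # bs"
  proof (rule nth_equalityI)
    fix k assume "k < length (w[i := w ! Suc i, Suc i := w ! i])"
    moreover have "\<not> k \<le> Suc i \<Longrightarrow> Suc (Suc (k - 2)) = k" by arith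
    ultimately show "w[i := w ! Suc i, Suc i := w ! i] ! k = (as @ w ! Suc i # w ! i # bs) ! k"
      using assms by (auto simp: as_def bs_def nth_append nth_list_update min_def nth_Cons')
  qed (use assms in \<open>simp add: as_def bs_def\<close>)
  then show ?thesis using inv_length_swap[of as "w ! i" "w ! Suc i" bs] w by simp
qed

lemma cmult_generator:
  assumes "w \<in> colored_perms r n" "g \<in> generators r n" "0 < n" "0 < r"
  shows "cmult r w g \<in> colored_perms r n \<and> inv_length (cmult r w g) \<le> inv_length w + 1"
proof (cases "g = gen0 r n")
  case True
  let ?z = "Suc (snd (w ! 0)) mod r"
  have "inv_length (w[0 := (fst (w ! 0), ?z)]) + snd (w ! 0) = inv_length w + ?z"
    by (rule inv_length_recolor_head[OF assms(1,3)])
  moreover have "?z \<le> Suc (snd (w ! 0))" by (rule mod_less_eq_dividend)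
  ultimately have "inv_length (w[0 := (fst (w ! 0), ?z)]) \<le> inv_length w + 1" by linarith
  then show ?thesis
    using True cmult_gen0[OF assms(1,3)] colored_perms_recolor_head[OF assms(1,3)] assms(4) by simp
next
  case False
  then obtain k where k: "g = geni n k" "1 \<le> k" "k \<le> n - 1"
    using assms(2) by (auto simp: generators_def)
  then obtain i where i: "g = geni n (Suc i)" "Suc i < n"
    using assms(3) by (cases k) auto
  have l: "length w = n" using colored_permsD[OF assms(1)] by simp
  have "fst (w ! i) \<noteq> fst (w ! Suc i)"
    using colored_permsD[OF assms(1)] i l by (intro fst_nth_neq) auto
  then have "inv_pair (w ! i) (w ! Suc i) + inv_pair (w ! Suc i) (w ! i) = 1"
    by (rule inv_pair_add_swap)
  then show ?thesis
    using inv_length_swap_adjacent[of i w] cmult_geni[OF assms(1) i(2)]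
      colored_perms_swap[OF assms(1) i(2)] i l
    by simp
qed

lemma cid_if_no_descent:
  assumes "w \<in> colored_perms r n" "0 < n" "snd (w ! 0) = 0"
    and ascent: "\<And>i. Suc i < n \<Longrightarrow> inv_pair (w ! i) (w ! Suc i) = 0"
  shows "w = cid n"
proof -
  have l: "length w = n" and dw: "distinct (map fst w)" and sw: "set (map fst w) = {1..n}"
    using colored_permsD[OF assms(1)] by auto
  have neq: "\<And>i. Suc i < n \<Longrightarrow> fst (w ! i) \<noteq> fst (w ! Suc i)"
    using dw l by (intro fst_nth_neq) auto
  have uncolored: "k < n \<Longrightarrow> snd (w ! k) = 0" for k
  proof (induction k)
    case (Suc k)
    then show ?case using ascent[OF Suc.prems] neq[OF Suc.prems] unfolding inv_pair_def
      by (auto split: if_splits)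
  qed (use assms(3) in simp)
  have "Suc k < n \<Longrightarrow> fst (w ! k) < fst (w ! Suc k)" for k
    using uncolored[of k] ascent[of k] neq[of k] unfolding inv_pair_def by (auto split: if_splits)
  then have "sorted (map fst w)" unfolding sorted_iff_nth_Suc using l by (simp add: less_imp_le)
  then have fsts: "map fst w = [1..<Suc n]"
    using dw sw by (intro sorted_distinct_set_unique) (auto simp del: upt_Suc)
  show ?thesis
  proof (rule nth_equalityI)
    fix k assume k: "k < length w"
    have "fst (w ! k) = Suc k" using arg_cong[OF fsts, of "\<lambda>xs. xs ! k"] k l by (simp del: upt_Suc)
    then show "w ! k = cid n ! k" using uncolored[of k] k l by (cases "w ! k") simp
  qed (use l in simp)
qed

lemma exists_descent:
  assumes "w \<in> colored_perms r n" "0 < n" "w \<noteq> cid n"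
  obtains w' g where "w' \<in> colored_perms r n" "g \<in> generators r n" "cmult r w' g = w"
    "inv_length w' + 1 = inv_length w"
proof (cases "snd (w ! 0) = 0")
  case False
  define w' where "w' = w[0 := (fst (w ! 0), snd (w ! 0) - 1)]"
  have l: "length w = n" using colored_permsD[OF assms(1)] by simp
  have z: "snd (w ! 0) < r" using colored_permsD[OF assms(1)] l assms(2) by auto
  have w': "w' \<in> colored_perms r n"
    unfolding w'_def using z by (intro colored_perms_recolor_head[OF assms(1,2)]) simp
  have "inv_length w' + snd (w ! 0) = inv_length w + (snd (w ! 0) - 1)"
    unfolding w'_def by (rule inv_length_recolor_head[OF assms(1,2)])
  then have "inv_length w' + 1 = inv_length w" using False by simp
  moreover have "cmult r w' (gen0 r n) = w"
    using cmult_gen0[OF w' assms(2)] False z l assms(2) by (simp add: w'_def)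
  ultimately show ?thesis using that[of w' "gen0 r n"] w' by (simp add: generators_def)
next
  case True
  obtain i where i: "Suc i < n" "inv_pair (w ! i) (w ! Suc i) \<noteq> 0"
    using cid_if_no_descent[OF assms(1,2) True] assms(3) by blast
  have l: "length w = n" using colored_permsD[OF assms(1)] by simp
  define w' where "w' = w[i := w ! Suc i, Suc i := w ! i]"
  have "fst (w ! i) \<noteq> fst (w ! Suc i)"
    using colored_permsD[OF assms(1)] i l by (intro fst_nth_neq) auto
  then have "inv_pair (w ! i) (w ! Suc i) + inv_pair (w ! Suc i) (w ! i) = 1"
    by (rule inv_pair_add_swap)
  then have "inv_length w' + 1 = inv_length w"
    using inv_length_swap_adjacent[of i w] i l unfolding w'_def by simp
  moreover have w': "w' \<in> colored_perms r n"
    unfolding w'_def by (rule colored_perms_swap[OF assms(1) i(1)])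
  moreover have "cmult r w' (geni n (Suc i)) = w"
    using cmult_geni[OF w' i(1)] i l unfolding w'_def
    by (auto intro!: nth_equalityI simp: nth_list_update)
  moreover have "geni n (Suc i) \<in> generators r n" using i(1) by (auto simp: generators_def)
  ultimately show ?thesis using that by blast
qed

lemma inv_length_le_length_word:
  assumes "set gs \<subseteq> generators r n" "0 < n" "0 < r"
  shows "foldl (cmult r) (cid n) gs \<in> colored_perms r n
       \<and> inv_length (foldl (cmult r) (cid n) gs) \<le> length gs"
  using assms(1)
proof (induction gs rule: rev_induct)
  case (snoc g gs)
  then show ?case using cmult_generator[of _ r n g] assms(2,3) by fastforce
qed (simp add: cid_in_colored_perms[OF assms(3)] inv_length_cid)

lemma exists_word_of_inv_length:
  assumes "w \<in> colored_perms r n" "0 < n"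
  shows "\<exists>gs. length gs = inv_length w \<and> set gs \<subseteq> generators r n \<and> foldl (cmult r) (cid n) gs = w"
  using assms(1)
proof (induction "inv_length w" arbitrary: w)
  case 0
  then have "w = cid n" using exists_descent[OF _ assms(2)] by (metis add_is_0 one_neq_zero)
  then show ?case using 0 by (intro exI[of _ "[]"]) simp
next
  case (Suc k)
  then have "w \<noteq> cid n" using inv_length_cid[of n] by auto
  then obtain w' g where w': "w' \<in> colored_perms r n" "g \<in> generators r n" "cmult r w' g = w"
    "inv_length w' + 1 = inv_length w"
    using exists_descent[OF Suc.prems assms(2)] by blast
  then obtain gs where "length gs = inv_length w'" "set gs \<subseteq> generators r n"
    "foldl (cmult r) (cid n) gs = w'"
    using Suc.hyps(1)[of w'] Suc.hyps(2) by auto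
  then show ?case using w' by (intro exI[of _ "gs @ [g]"]) simp
qed

lemma clength_eq_inv_length:
  assumes "w \<in> colored_perms r n" "0 < n" "0 < r"
  shows "clength r n w = inv_length w"
  unfolding clength_def
proof (rule Least_equality)
  show "\<exists>gs. length gs = inv_length w \<and> set gs \<subseteq> generators r n \<and> foldl (cmult r) (cid n) gs = w"
    by (rule exists_word_of_inv_length[OF assms(1,2)])
next
  fix k assume "\<exists>gs. length gs = k \<and> set gs \<subseteq> generators r n \<and> foldl (cmult r) (cid n) gs = w"
  then show "inv_length w \<le> k" using inv_length_le_length_word[of _ r n] assms(2,3) by blast
qed

section \<open>Inserting the largest letter\<close>

text \<open>Positions \<open>c\<close> are 0-based here; with the paper's \<open>c\<^sub>j = c + 1\<close> and \<open>j = n + 1\<close>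
  this is the cost \<open>j - c\<^sub>j + \<chi>(e > 0) (2 (c\<^sub>j - 1) + e)\<close> of one sorting step.\<close>

definition insert_cost :: "nat \<Rightarrow> nat \<Rightarrow> nat \<Rightarrow> nat" where
  "insert_cost n c e = (if e = 0 then n - c else n + c + e)"

lemma sum_power_insertion:
  fixes q :: "'a::comm_semiring_1"
  assumes bij: "bij_betw (\<lambda>(u, c, e). ins u c e) (A \<times> {..n} \<times> {..<r}) B"
    and stat: "\<And>u c e. u \<in> A \<Longrightarrow> c \<le> n \<Longrightarrow> e < r \<Longrightarrow> f (ins u c e) = insert_cost n c e + g u"
  shows "(\<Sum>w\<in>B. q ^ f w) = (\<Sum>u\<in>A. q ^ g u) * (\<Sum>c\<le>n. \<Sum>e<r. q ^ insert_cost n c e)"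
proof -
  have "(\<Sum>w\<in>B. q ^ f w) = (\<Sum>(u, c, e)\<in>A \<times> {..n} \<times> {..<r}. q ^ f (ins u c e))"
    using sum.reindex_bij_betw[OF bij, of "\<lambda>w. q ^ f w"] by (simp add: case_prod_beta)
  also have "\<dots> = (\<Sum>(u, c, e)\<in>A \<times> {..n} \<times> {..<r}. q ^ g u * q ^ insert_cost n c e)"
    by (intro sum.cong refl) (auto simp: stat power_add mult.commute)
  also have "\<dots> = (\<Sum>u\<in>A. q ^ g u * (\<Sum>c\<le>n. \<Sum>e<r. q ^ insert_cost n c e))"
    by (simp add: sum.cartesian_product[symmetric] sum_distrib_left)
  also have "\<dots> = (\<Sum>u\<in>A. q ^ g u) * (\<Sum>c\<le>n. \<Sum>e<r. q ^ insert_cost n c e)"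
    by (simp add: sum_distrib_right)
  finally show ?thesis .
qed

lemma sum_power_insert_cost:
  fixes q :: "'a::comm_semiring_1"
  assumes "0 < r"
  shows "(\<Sum>c\<le>n. \<Sum>e<r. q ^ insert_cost n c e) = qint q (Suc n) * (1 + q ^ Suc n * qint q (r - 1))"
proof -
  have r: "{..<r} = {..<Suc (r - 1)}" using assms by simp
  have "(\<Sum>c\<le>n. \<Sum>e<r. q ^ insert_cost n c e)
      = (\<Sum>c\<le>n. q ^ (n - c)) + (\<Sum>c\<le>n. \<Sum>e<r - 1. q ^ (n + c + Suc e))"
    unfolding r sum.lessThan_Suc_shift by (simp add: insert_cost_def sum.distrib)
  also have "(\<Sum>c\<le>n. q ^ (n - c)) = (\<Sum>c\<le>n. q ^ c)"
    by (rule sum.reindex_bij_witness[of _ "\<lambda>c. n - c" "\<lambda>c. n - c"]) auto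
  also have "(\<Sum>c\<le>n. \<Sum>e<r - 1. q ^ (n + c + Suc e)) = (\<Sum>c\<le>n. q ^ c) * (q ^ Suc n * qint q (r - 1))"
    by (simp add: qint_def sum_distrib_left sum_distrib_right power_add mult_ac)
      (subst sum.swap, simp add: mult_ac)
  finally show ?thesis by (simp add: qint_def lessThan_Suc_atMost algebra_simps)
qed

lemma sor_pos_eqI:
  assumes "distinct (map fst w)" "k < length w" "fst (w ! k) = length w"
  shows "sor_pos w = Suc k"
  unfolding sor_pos_def
proof (rule arg_cong[where f = Suc], rule Least_equality)
  fix i assume "i < length w \<and> fst (w ! i) = length w"
  then show "k \<le> i" using fst_nth_neq[OF assms(1), of i k] assms by (cases "i = k") auto
qed (use assms in simp)

lemma max_letter_split:
  assumes "w \<in> colored_perms r (Suc n)"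
  obtains k where "k \<le> n" "sor_pos w = Suc k" "w = take k w @ (Suc n, snd (w ! k)) # drop (Suc k) w"
proof -
  have l: "length w = Suc n" and d: "distinct (map fst w)" using colored_permsD[OF assms] by auto
  have "Suc n \<in> set (map fst w)" using colored_permsD[OF assms] by simp
  then obtain k where k: "k < Suc n" "fst (w ! k) = Suc n"
    using l by (auto simp: in_set_conv_nth)
  have "w = take k w @ w ! k # drop (Suc k) w" using k l by (intro id_take_nth_drop) simp
  also have "w ! k = (Suc n, snd (w ! k))" using k by (metis prod.collapse)
  finally show ?thesis using that k l sor_pos_eqI[OF d] by simp
qed

definition insert_max :: "(nat \<times> nat) list \<Rightarrow> nat \<Rightarrow> nat \<Rightarrow> (nat \<times> nat) list" where
  "insert_max u c e = take c u @ (Suc (length u), e) # drop c u"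

definition remove_max :: "(nat \<times> nat) list \<Rightarrow> (nat \<times> nat) list \<times> nat \<times> nat" where
  "remove_max w = (let k = sor_pos w - 1 in (take k w @ drop (Suc k) w, k, snd (w ! k)))"

lemma insert_max_in_colored_perms:
  assumes "u \<in> colored_perms r n" "e < r"
  shows "insert_max u c e \<in> colored_perms r (Suc n)"
  using assms colored_perms_insert_max_iff[of "take c u" n e "drop c u" r] colored_permsD[OF assms(1)]
  by (simp add: insert_max_def)

lemma remove_max_insert_max:
  assumes "u \<in> colored_perms r n" "c \<le> n" "e < r"
  shows "remove_max (insert_max u c e) = (u, c, e)"
proof -
  have "sor_pos (insert_max u c e) = Suc c"
    using colored_permsD[OF insert_max_in_colored_perms[OF assms(1,3)]] colored_permsD[OF assms(1)] assms(2)
    by (intro sor_pos_eqI) (auto simp: insert_max_def nth_append)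
  then show ?thesis
    using colored_permsD[OF assms(1)] assms(2) by (simp add: remove_max_def insert_max_def nth_append)
qed

lemma bij_betw_insert_max:
  "bij_betw (\<lambda>(u, c, e). insert_max u c e) (colored_perms r n \<times> {..n} \<times> {..<r}) (colored_perms r (Suc n))"
proof (rule bij_betw_byWitness[where f' = remove_max])
  show "\<forall>t\<in>colored_perms r n \<times> {..n} \<times> {..<r}. remove_max ((\<lambda>(u, c, e). insert_max u c e) t) = t"
    using remove_max_insert_max by auto
  show "(\<lambda>(u, c, e). insert_max u c e) ` (colored_perms r n \<times> {..n} \<times> {..<r}) \<subseteq> colored_perms r (Suc n)"
    using insert_max_in_colored_perms by auto
  have "(\<lambda>(u, c, e). insert_max u c e) (remove_max w) = w \<and> remove_max w \<in> colored_perms r n \<times> {..n} \<times> {..<r}"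
    if w: "w \<in> colored_perms r (Suc n)" for w
  proof -
    obtain k where k: "k \<le> n" "sor_pos w = Suc k"
      and split: "w = take k w @ (Suc n, snd (w ! k)) # drop (Suc k) w"
      using max_letter_split[OF w] by blast
    have "take k w @ drop (Suc k) w \<in> colored_perms r n" "snd (w ! k) < r"
      using w colored_perms_insert_max_iff[of "take k w" n "snd (w ! k)" "drop (Suc k) w" r] split by simp_all
    moreover have "length w = Suc n" using colored_permsD[OF w] by simp
    ultimately show ?thesis using k split by (simp add: remove_max_def insert_max_def)
  qed
  then show "\<forall>w\<in>colored_perms r (Suc n). (\<lambda>(u, c, e). insert_max u c e) (remove_max w) = w"
    and "remove_max ` colored_perms r (Suc n) \<subseteq> colored_perms r n \<times> {..n} \<times> {..<r}"
    by blast+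
qed

lemma inv_length_insert_max:
  assumes "u \<in> colored_perms r n" "c \<le> n"
  shows "inv_length (insert_max u c e) = insert_cost n c e + inv_length u"
proof -
  have l: "length u = n" using colored_permsD[OF assms(1)] by simp
  have small: "a \<le> n" if "(a, b) \<in> set u" for a b
    using that colored_permsD[OF assms(1)] by force
  have "(\<Sum>a\<leftarrow>take c u. inv_pair a (Suc n, e)) = (\<Sum>a\<leftarrow>take c u. if e \<noteq> 0 then 1 else 0)"
    using small by (intro arg_cong[where f = sum_list] map_cong) (auto simp: inv_pair_def dest!: in_set_takeD dest: small)
  moreover have "(\<Sum>b\<leftarrow>drop c u. inv_pair (Suc n, e) b) = (\<Sum>b\<leftarrow>drop c u. if e = 0 then 1 else 0)"
    using small by (intro arg_cong[where f = sum_list] map_cong) (auto simp: inv_pair_def dest!: in_set_dropD dest: small)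
  moreover have "inv_length (insert_max u c e) = inv_length (take c u @ drop c u)
      + (\<Sum>a\<leftarrow>take c u. inv_pair a (Suc n, e)) + (\<Sum>b\<leftarrow>drop c u. inv_pair (Suc n, e) b)
      + color_weight (Suc n, e)"
    unfolding insert_max_def l by (rule inv_length_remove)
  ultimately show ?thesis using l assms(2) by (simp add: sum_list_triv insert_cost_def color_weight_def)
qed

lemma sum_power_inv_length_Suc:
  fixes q :: "'a::comm_semiring_1"
  assumes "0 < r"
  shows "(\<Sum>w\<in>colored_perms r (Suc n). q ^ inv_length w)
       = (\<Sum>u\<in>colored_perms r n. q ^ inv_length u) * (qint q (Suc n) * (1 + q ^ Suc n * qint q (r - 1)))"
proof -
  have "(\<Sum>w\<in>colored_perms r (Suc n). q ^ inv_length w)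
      = (\<Sum>u\<in>colored_perms r n. q ^ inv_length u) * (\<Sum>c\<le>n. \<Sum>e<r. q ^ insert_cost n c e)"
    by (rule sum_power_insertion[OF bij_betw_insert_max]) (rule inv_length_insert_max)
  then show ?thesis by (simp only: sum_power_insert_cost[OF assms])
qed

section \<open>The sorting index\<close>

definition sort_insert :: "nat \<Rightarrow> (nat \<times> nat) list \<Rightarrow> nat \<Rightarrow> nat \<Rightarrow> (nat \<times> nat) list" where
  "sort_insert r u c e = (if c = length u then u @ [(Suc (length u), (r - e) mod r)]
     else u[c := (Suc (length u), (r - e) mod r)] @ [(fst (u ! c), (snd (u ! c) + e) mod r)])"

lemma add_mod_sub_mod_cancel: "(y::nat) < r \<Longrightarrow> e < r \<Longrightarrow> ((y + e) mod r + r - e) mod r = y"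
  by (cases "y + e < r") (auto simp: mod_if)

lemma sor_Suc:
  assumes "length w = Suc m"
  shows "sor r w = sor_cost r w + sor r (sor_step r w)"
proof -
  have l: "length (sor_step r w) = m" using assms by (simp add: sor_step_def Let_def)
  have "sor r w = (\<Sum>k<Suc m. sor_cost r ((sor_step r ^^ k) w))" by (simp add: sor_def assms)
  also have "\<dots> = sor_cost r w + (\<Sum>k<m. sor_cost r ((sor_step r ^^ Suc k) w))"
    by (subst sum.lessThan_Suc_shift) simp
  also have "(\<Sum>k<m. sor_cost r ((sor_step r ^^ Suc k) w)) = sor r (sor_step r w)"
    by (simp add: sor_def l funpow_Suc_right del: funpow.simps)
  finally show ?thesis .
qed

context
  fixes r n u c e
  assumes u: "u \<in> colored_perms r n" and c: "c \<le> n" and e: "e < r"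
begin

lemma length_sort_insert: "length (sort_insert r u c e) = Suc n"
  using colored_permsD[OF u] c by (simp add: sort_insert_def)

lemma nth_sort_insert_max: "sort_insert r u c e ! c = (Suc n, (r - e) mod r)"
  using colored_permsD[OF u] c by (auto simp: sort_insert_def nth_append)

lemma sort_insert_in_colored_perms: "sort_insert r u c e \<in> colored_perms r (Suc n)"
proof (cases "c = n")
  case True
  then show ?thesis using colored_perms_insert_max_iff[of u n "(r - e) mod r" "[]" r] u e colored_permsD[OF u]
    by (simp add: sort_insert_def)
next
  case False
  then have cn: "c < n" using c by simp
  have l: "length u = n" and m: "mset (map fst u) = mset [1..<Suc n]" and col: "\<forall>x\<in>set u. snd x < r"
    using u unfolding colored_perms_mset_iff by auto
  have "mset (map fst (sort_insert r u c e)) = mset ((map fst u)[c := Suc n]) + {#fst (u ! c)#}"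
    using False l by (simp add: sort_insert_def map_update)
  also have "\<dots> = add_mset (Suc n) (mset (map fst u) - {#fst (u ! c)#}) + {#fst (u ! c)#}"
    using cn l by (simp add: mset_update)
  also have "\<dots> = add_mset (Suc n) (mset (map fst u))"
    using cn l by (simp add: insert_DiffM2 nth_mem)
  also have "\<dots> = mset [1..<Suc (Suc n)]"
    unfolding m by simp
  finally have "mset (map fst (sort_insert r u c e)) = mset [1..<Suc (Suc n)]" .
  moreover have "\<forall>x\<in>set (sort_insert r u c e). snd x < r"
    using False l col e by (auto simp: sort_insert_def dest!: set_update_subset_insert[THEN subsetD])
  ultimately show ?thesis unfolding colored_perms_mset_iff using length_sort_insert by blast
qed

lemma sor_pos_sort_insert: "sor_pos (sort_insert r u c e) = Suc c"
  using colored_permsD[OF sort_insert_in_colored_perms] length_sort_insert nth_sort_insert_max c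
  by (intro sor_pos_eqI) auto

lemma sor_e_sort_insert: "sor_e r (sort_insert r u c e) = e"
  using nth_sort_insert_max e unfolding sor_e_def sor_pos_sort_insert
  by (cases "e = 0") auto

lemma sor_step_sort_insert: "sor_step r (sort_insert r u c e) = u"
proof (cases "c = n")
  case True
  then show ?thesis using colored_permsD[OF u]
    unfolding sor_step_def Let_def sor_pos_sort_insert length_sort_insert by (simp add: sort_insert_def)
next
  case False
  have l: "length u = n" using colored_permsD[OF u] by simp
  then have cn: "c < n" using c False by simp
  have col: "snd (u ! c) < r" using colored_permsD[OF u] cn l by (auto simp: nth_mem)
  have last: "sort_insert r u c e ! n = (fst (u ! c), (snd (u ! c) + e) mod r)"
    using False l by (simp add: sort_insert_def nth_append)
  have "sor_step r (sort_insert r u c e) = take n ((sort_insert r u c e)[c := u ! c])"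
    unfolding sor_step_def Let_def sor_pos_sort_insert length_sort_insert sor_e_sort_insert
    using cn by (simp add: last add_mod_sub_mod_cancel[OF col e])
  also have "\<dots> = u" using False cn l by (simp add: take_update_swap sort_insert_def)
  finally show ?thesis .
qed

lemma sor_sort_insert: "sor r (sort_insert r u c e) = insert_cost n c e + sor r u"
proof -
  have "sor_cost r (sort_insert r u c e) = insert_cost n c e"
    unfolding sor_cost_def Let_def sor_pos_sort_insert length_sort_insert sor_e_sort_insert insert_cost_def
    using c by auto
  then show ?thesis using sor_Suc[OF length_sort_insert] sor_step_sort_insert by simp
qed

end

lemma bij_betw_sort_insert:
  "bij_betw (\<lambda>(u, c, e). sort_insert r u c e) (colored_perms r n \<times> {..n} \<times> {..<r}) (colored_perms r (Suc n))"
proof -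
  let ?T = "colored_perms r n \<times> {..n} \<times> {..<r}"
  let ?f = "\<lambda>(u, c, e). sort_insert r u c e"
  have inj: "inj_on ?f ?T"
    by (rule inj_on_inverseI[where g = "\<lambda>w. (sor_step r w, sor_pos w - 1, sor_e r w)"])
      (auto simp: sor_step_sort_insert sor_pos_sort_insert sor_e_sort_insert)
  have sub: "?f ` ?T \<subseteq> colored_perms r (Suc n)"
    using sort_insert_in_colored_perms by auto
  have "card (?f ` ?T) = card (colored_perms r (Suc n))"
    using card_image[OF inj] bij_betw_same_card[OF bij_betw_insert_max] by simp
  then have "?f ` ?T = colored_perms r (Suc n)"
    using card_subset_eq[OF finite_colored_perms sub] by simp
  then show ?thesis using inj unfolding bij_betw_def by simp
qed

lemma sum_power_sor_Suc:
  fixes q :: "'a::comm_semiring_1"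
  assumes "0 < r"
  shows "(\<Sum>w\<in>colored_perms r (Suc n). q ^ sor r w)
       = (\<Sum>u\<in>colored_perms r n. q ^ sor r u) * (qint q (Suc n) * (1 + q ^ Suc n * qint q (r - 1)))"
proof -
  have "(\<Sum>w\<in>colored_perms r (Suc n). q ^ sor r w)
      = (\<Sum>u\<in>colored_perms r n. q ^ sor r u) * (\<Sum>c\<le>n. \<Sum>e<r. q ^ insert_cost n c e)"
    by (rule sum_power_insertion[OF bij_betw_sort_insert]) (rule sor_sort_insert)
  then show ?thesis by (simp only: sum_power_insert_cost[OF assms])
qed

lemma sum_power_inv_length_sor:
  fixes q :: "'a::comm_semiring_1"
  assumes "0 < r"
  shows "(\<Sum>w\<in>colored_perms r n. q ^ inv_length w) = qfact q n * (\<Prod>i=1..n. 1 + q ^ i * qint q (r - 1))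
       \<and> (\<Sum>w\<in>colored_perms r n. q ^ sor r w) = qfact q n * (\<Prod>i=1..n. 1 + q ^ i * qint q (r - 1))"
proof (induction n)
  case 0
  then show ?case by (simp add: colored_perms_0 qfact_def sor_def)
next
  case (Suc n)
  have factor: "qfact q (Suc n) * (\<Prod>i=1..Suc n. 1 + q ^ i * qint q (r - 1))
      = qfact q n * (\<Prod>i=1..n. 1 + q ^ i * qint q (r - 1))
        * (qint q (Suc n) * (1 + q ^ Suc n * qint q (r - 1)))"
    by (simp add: qfact_def prod.nat_ivl_Suc' mult_ac)
  show ?case
    unfolding factor sum_power_inv_length_Suc[OF assms] sum_power_sor_Suc[OF assms] using Suc by simp
qed

theorem theorem2p3:
  fixes q :: "'a::comm_ring_1" and r n :: nat
  assumes "0 < r" and "0 < n"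
  shows "(\<Sum>w\<in>colored_perms r n. q ^ clength r n w) = (\<Sum>w\<in>colored_perms r n. q ^ sor r w)
       \<and> (\<Sum>w\<in>colored_perms r n. q ^ sor r w)
           = qfact q n * (\<Prod>i=1..n. 1 + q ^ i * qint q (r - 1))"
proof -
  have "(\<Sum>w\<in>colored_perms r n. q ^ clength r n w) = (\<Sum>w\<in>colored_perms r n. q ^ inv_length w)"
    using clength_eq_inv_length[OF _ assms(2,1)] by (intro sum.cong) auto
  then show ?thesis using sum_power_inv_length_sor[OF assms(1), of q n] by simp
qed

end
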